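(* Let $s\in\{0,\tfrac12\}$, $\lambda\in\mathbb{C}$, and let $\sigma\in\mathrm{Aut}(\mathfrak{L}^s_\lambda)$ be normalized, i.e. there are $\epsilon\in\{1,-1\}$, $\alpha,\mu\in\mathbb{C}\setminus\{0\}$, $\beta\in\mathbb{C}$ with $\sigma(L_m)=\epsilon\alpha^mL_{\epsilon m}+m\alpha^m\beta I_{\epsilon m}$ and $\sigma(I_m)=\alpha^m\mu I_{\epsilon m}$ for all $m\in\mathbb{Z}$. Then for every $p\in s+\mathbb{Z}$ there is $h_p\in\mathbb{C}$ with $\sigma(H_p)=h_pH_{\epsilon p}$.
   Context: For $s\in\{0,\tfrac12\}$ and $\lambda\in\mathbb{C}$, $\mathfrak{L}^s_\lambda$ is the complex Lie superalgebra with basis $\{L_m,I_m,G_p,H_p : m\in\mathbb{Z},\ p\in s+\mathbb{Z}\}$, even part spanned by the $L_m,I_m$, odd part spanned by the $G_p,H_p$, with brackets $[L_m,L_n]=(m-n)L_{m+n}$, $[L_m,I_n]=(m-n)I_{m+n}$, $[L_m,H_p]=(\tfrac m2-p)H_{m+p}$, $[L_m,G_p]=(\tfrac m2-p)G_{m+p}+\lambda(m+1)H_{m+p}$, $[I_m,G_p]=(m-2p)H_{m+p}$, $[G_p,G_q]=I_{p+q}$, plus super-antisymmetry; all other brackets of basis elements are zero. $\mathrm{Aut}(\mathfrak{L})$ is the group of bijective parity-preserving linear maps $\sigma$ with $\sigma([x,y])=[\sigma(x),\sigma(y)]$. *)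

theory Defs
  imports Complex_Main
begin

datatype basis = L int | I int | G rat | H rat

definition valid_idx :: "rat \<Rightarrow> basis \<Rightarrow> bool" where
  "valid_idx s b = (case b of L m \<Rightarrow> True | I m \<Rightarrow> True
                    | G p \<Rightarrow> p - s \<in> \<int> | H p \<Rightarrow> p - s \<in> \<int>)"

definition is_even_b :: "basis \<Rightarrow> bool" where
  "is_even_b b = (case b of L m \<Rightarrow> True | I m \<Rightarrow> True | G p \<Rightarrow> False | H p \<Rightarrow> False)"

type_synonym vec = "basis \<Rightarrow> complex"

definition supp :: "vec \<Rightarrow> basis set" where
  "supp x = {b. x b \<noteq> 0}"

definition V :: "rat \<Rightarrow> vec set" where
  "V s = {x. finite (supp x) \<and> (\<forall>b\<in>supp x. valid_idx s b)}"

definition evenV :: "rat \<Rightarrow> vec set" where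
  "evenV s = {x \<in> V s. \<forall>b\<in>supp x. is_even_b b}"

definition oddV :: "rat \<Rightarrow> vec set" where
  "oddV s = {x \<in> V s. \<forall>b\<in>supp x. \<not> is_even_b b}"

definition zv :: vec where "zv = (\<lambda>c. 0)"

definition addv :: "vec \<Rightarrow> vec \<Rightarrow> vec" where
  "addv x y = (\<lambda>c. x c + y c)"

definition e :: "basis \<Rightarrow> vec" where
  "e b = (\<lambda>c. if c = b then 1 else 0)"

definition scl :: "complex \<Rightarrow> vec \<Rightarrow> vec" where
  "scl a x = (\<lambda>c. a * x c)"

fun bb :: "complex \<Rightarrow> basis \<Rightarrow> basis \<Rightarrow> vec" where
  "bb lam (L m) (L n) = scl (of_int (m - n)) (e (L (m + n)))"
| "bb lam (L m) (I n) = scl (of_int (m - n)) (e (I (m + n)))"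
| "bb lam (I n) (L m) = scl (- of_int (m - n)) (e (I (m + n)))"
| "bb lam (L m) (H p) = scl (of_int m / 2 - of_rat p) (e (H (of_int m + p)))"
| "bb lam (H p) (L m) = scl (- (of_int m / 2 - of_rat p)) (e (H (of_int m + p)))"
| "bb lam (L m) (G p) = addv (scl (of_int m / 2 - of_rat p) (e (G (of_int m + p)))) (scl (lam * of_int (m + 1)) (e (H (of_int m + p))))"
| "bb lam (G p) (L m) = addv (scl (- (of_int m / 2 - of_rat p)) (e (G (of_int m + p)))) (scl (- (lam * of_int (m + 1))) (e (H (of_int m + p))))"
| "bb lam (I m) (G p) = scl (of_int m - 2 * of_rat p) (e (H (of_int m + p)))"
| "bb lam (G p) (I m) = scl (- (of_int m - 2 * of_rat p)) (e (H (of_int m + p)))"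
| "bb lam (G p) (G q) = e (I \<lfloor>p + q\<rfloor>)"
| "bb lam _ _ = zv"

definition br :: "complex \<Rightarrow> vec \<Rightarrow> vec \<Rightarrow> vec" where
  "br lam x y = (\<lambda>c. \<Sum>a\<in>supp x. \<Sum>b\<in>supp y. x a * y b * bb lam a b c)"

definition is_aut :: "rat \<Rightarrow> complex \<Rightarrow> (vec \<Rightarrow> vec) \<Rightarrow> bool" where
  "is_aut s lam \<sigma> \<longleftrightarrow>
     bij_betw \<sigma> (V s) (V s)
   \<and> (\<forall>x\<in>V s. \<forall>y\<in>V s. \<sigma> (addv x y) = addv (\<sigma> x) (\<sigma> y))
   \<and> (\<forall>a. \<forall>x\<in>V s. \<sigma> (scl a x) = scl a (\<sigma> x))
   \<and> \<sigma> ` evenV s \<subseteq> evenV s \<and> \<sigma> ` oddV s \<subseteq> oddV s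
   \<and> (\<forall>x\<in>V s. \<forall>y\<in>V s. \<sigma> (br lam x y) = br lam (\<sigma> x) (\<sigma> y))"

end

theory Submission
  imports Defs
begin

text \<open>Since \<open>[I\<^sub>m, H\<^sub>p] = 0\<close> and \<open>\<sigma>(I\<^sub>m)\<close> is a nonzero multiple of
  \<open>I\<^sub>\<epsilon>\<^sub>m\<close>, the \<open>H\<^sub>n\<^sub>+\<^sub>q\<close>-coefficient of \<open>[I\<^sub>n, y]\<close>, namely \<open>(n - 2q) y(G\<^sub>q)\<close>, vanishes for all \<open>n\<close>;
  so \<open>y\<close> has no \<open>G\<close>-components. Then \<open>\<sigma>(L\<^sub>0) = \<epsilon> L\<^sub>0\<close> and \<open>[L\<^sub>0, H\<^sub>p] = -p H\<^sub>p\<close> give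
  \<open>\<epsilon> q y(H\<^sub>q) = p y(H\<^sub>q)\<close>, so only \<open>H\<^sub>\<epsilon>\<^sub>p\<close> survives. Neither the value of \<open>s\<close> nor \<open>\<beta>\<close>
  plays a role.\<close>

lemma supp_e [simp]: "supp (e b) = {b}"
  by (auto simp: supp_def e_def)

lemma e_in_V: "valid_idx s b \<Longrightarrow> e b \<in> V s"
  by (simp add: V_def)

lemma br_e_e [simp]: "br lam (e a) (e b) = bb lam a b"
  by (simp add: br_def, simp add: e_def)

lemma vec_eq_scl_e:
  assumes "\<And>c. c \<noteq> b \<Longrightarrow> y c = 0"
  shows "y = scl (y b) (e b)"
  using assms by (auto simp: scl_def e_def)

lemma oddV_even_coeff:
  assumes "y \<in> oddV s" "is_even_b b"
  shows "y b = 0"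
  using assms by (auto simp: oddV_def supp_def)

lemma sum_supp_single:
  assumes "finite (supp y)" "\<And>b. b \<noteq> c \<Longrightarrow> y b * g b = 0"
  shows "(\<Sum>b\<in>supp y. y b * g b) = y c * g c"
proof -
  have rest: "(\<Sum>b\<in>supp y - {c}. y b * g b) = 0"
    using assms(2) by (intro sum.neutral) auto
  show ?thesis
  proof (cases "c \<in> supp y")
    case True
    with assms(1) rest show ?thesis
      by (simp add: sum.remove)
  next
    case False
    then have "supp y - {c} = supp y" "y c = 0"
      by (auto simp: supp_def)
    with rest show ?thesis by simp
  qed
qed

lemma br_scl_e:
  assumes "finite (supp y)"
  shows "br lam (scl k (e a)) y c = k * (\<Sum>b\<in>supp y. y b * bb lam a b c)"
proof (cases "k = 0")
  case False
  then have "supp (scl k (e a)) = {a}"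
    by (auto simp: supp_def scl_def e_def)
  then show ?thesis
    by (simp add: br_def sum_distrib_left scl_def e_def mult.assoc)
qed (simp add: br_def supp_def scl_def)

lemma br_I_coeff_H:
  assumes "finite (supp y)"
  shows "br lam (scl k (e (I n))) y (H (of_int n + q)) = k * (of_int n - 2 * of_rat q) * y (G q)"
proof -
  have "(\<Sum>b\<in>supp y. y b * bb lam (I n) b (H (of_int n + q)))
      = y (G q) * bb lam (I n) (G q) (H (of_int n + q))"
  proof (rule sum_supp_single[OF assms])
    fix b assume "b \<noteq> G q"
    then show "y b * bb lam (I n) b (H (of_int n + q)) = 0"
      by (cases b) (auto simp: scl_def e_def zv_def)
  qed
  then show ?thesis
    unfolding br_scl_e[OF assms] by (simp add: scl_def e_def)
qed

lemma br_L0_coeff_H: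
  assumes "finite (supp y)"
  shows "br lam (scl k (e (L 0))) y (H q) = k * (lam * y (G q) - of_rat q * y (H q))"
proof -
  have bb_L0: "bb lam (L 0) b (H q) = (if b = G q then lam else 0) + (if b = H q then - of_rat q else 0)"
    for b by (cases b) (auto simp: scl_def e_def zv_def addv_def)
  have "(\<Sum>b\<in>supp y. y b * (if b = G q then lam else 0)) = y (G q) * lam"
    using sum_supp_single[OF assms, of "G q" "\<lambda>b. if b = G q then lam else 0"] by simp
  moreover have "(\<Sum>b\<in>supp y. y b * (if b = H q then - of_rat q else 0)) = y (H q) * - of_rat q"
    using sum_supp_single[OF assms, of "H q" "\<lambda>b. if b = H q then - of_rat q else 0"] by simp
  ultimately show ?thesis
    unfolding br_scl_e[OF assms] bb_L0 by (simp add: distrib_left sum.distrib algebra_simps)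
qed

lemma G_coeff_zero_if_commutes_with_I:
  assumes "finite (supp y)"
    and "\<And>n. \<exists>k. k \<noteq> 0 \<and> br lam (scl k (e (I n))) y = zv"
  shows "y (G q) = 0"
proof -
  obtain n :: int where n: "of_int n - 2 * of_rat q \<noteq> (0::complex)"
    using of_rat_eq_0_iff[of q] by (cases "q = 0") (auto intro: that[of 1] that[of 0])
  obtain k where "k \<noteq> 0" "br lam (scl k (e (I n))) y = zv"
    using assms(2) by blast
  with br_I_coeff_H[OF assms(1), of lam k n q] n show ?thesis
    by (simp add: zv_def)
qed

lemma H_coeff_zero_off_L0_eigenvalue:
  assumes "finite (supp y)" "\<And>q. y (G q) = 0"
    and "br lam (scl k (e (L 0))) y = scl c y"
    and "c + k * of_rat q \<noteq> 0"
  shows "y (H q) = 0"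
proof -
  have "c * y (H q) = - k * of_rat q * y (H q)"
    using br_L0_coeff_H[OF assms(1), of lam k q] assms(2,3) by (simp add: scl_def fun_eq_iff)
  then have "(c + k * of_rat q) * y (H q) = 0"
    by (simp add: algebra_simps)
  with assms(4) show ?thesis by simp
qed

lemma is_aut_br:
  assumes "is_aut s lam \<sigma>" "x \<in> V s" "y \<in> V s"
  shows "\<sigma> (br lam x y) = br lam (\<sigma> x) (\<sigma> y)"
  using assms(1) unfolding is_aut_def by (elim conjE) (simp add: assms(2,3))

lemma is_aut_scl:
  assumes "is_aut s lam \<sigma>" "x \<in> V s"
  shows "\<sigma> (scl c x) = scl c (\<sigma> x)"
  using assms(1) unfolding is_aut_def by (elim conjE) (simp add: assms(2))

lemma is_aut_oddV:
  assumes "is_aut s lam \<sigma>" "x \<in> oddV s"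
  shows "\<sigma> x \<in> oddV s"
  using assms(1) unfolding is_aut_def by (elim conjE) (use assms(2) in blast)

lemma is_aut_zv:
  assumes "is_aut s lam \<sigma>"
  shows "\<sigma> zv = zv"
proof -
  have "zv \<in> V s"
    by (simp add: V_def supp_def zv_def)
  then have "\<sigma> (scl 0 zv) = scl 0 (\<sigma> zv)"
    by (rule is_aut_scl[OF assms])
  moreover have "scl 0 x = zv" for x
    by (simp add: scl_def zv_def)
  ultimately show ?thesis by simp
qed

lemma is_aut_bb:
  assumes "is_aut s lam \<sigma>" "valid_idx s a" "valid_idx s b"
  shows "\<sigma> (bb lam a b) = br lam (\<sigma> (e a)) (\<sigma> (e b))"
  using is_aut_br[OF assms(1) e_in_V[OF assms(2)] e_in_V[OF assms(3)]] by simp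

lemma sign_mult_eq_iff:
  fixes p q :: rat
  assumes "\<epsilon> * \<epsilon> = 1"
  shows "of_int \<epsilon> * q = p \<longleftrightarrow> q = of_int \<epsilon> * p"
  using assms by (metis mult.assoc mult_1 of_int_1 of_int_mult)

lemma finite_supp_oddV: "y \<in> oddV s \<Longrightarrow> finite (supp y)"
  by (simp add: oddV_def V_def)

theorem lemma3p4:
  fixes s :: rat and lam :: complex and \<sigma> :: "vec \<Rightarrow> vec"
    and \<epsilon> :: int and \<alpha> \<mu> \<beta> :: complex
  assumes "s = 0 \<or> s = 1/2"
    and "is_aut s lam \<sigma>"
    and "\<epsilon> = 1 \<or> \<epsilon> = -1"
    and "\<alpha> \<noteq> 0" and "\<mu> \<noteq> 0"
    and "\<And>m. \<sigma> (e (L m)) = addv (scl (of_int \<epsilon> * \<alpha> powi m) (e (L (\<epsilon> * m))))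
                            (scl (of_int m * \<alpha> powi m * \<beta>) (e (I (\<epsilon> * m))))"
    and "\<And>m. \<sigma> (e (I m)) = scl (\<alpha> powi m * \<mu>) (e (I (\<epsilon> * m)))"
  shows "\<forall>p. p - s \<in> \<int> \<longrightarrow> (\<exists>h. \<sigma> (e (H p)) = scl h (e (H (of_int \<epsilon> * p))))"
proof (intro allI impI)
  fix p assume "p - s \<in> \<int>"
  then have Hp: "valid_idx s (H p)" "e (H p) \<in> V s" "e (H p) \<in> oddV s"
    by (simp_all add: oddV_def V_def valid_idx_def is_even_b_def)
  define y where "y = \<sigma> (e (H p))"
  have y_odd: "y \<in> oddV s"
    unfolding y_def by (rule is_aut_oddV[OF assms(2) Hp(3)])
  have \<epsilon>\<epsilon>: "\<epsilon> * \<epsilon> = 1" using assms(3) by auto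
  have "br lam (scl (\<alpha> powi (\<epsilon> * n) * \<mu>) (e (I n))) y = zv" for n
    using is_aut_bb[OF assms(2) _ Hp(1), of "I (\<epsilon> * n)"] is_aut_zv[OF assms(2)]
    by (simp add: assms(7) y_def \<epsilon>\<epsilon> mult.assoc[symmetric] valid_idx_def)
  moreover have "\<alpha> powi (\<epsilon> * n) * \<mu> \<noteq> 0" for n
    using assms(4,5) by simp
  ultimately have G0: "y (G q) = 0" for q
    by (intro G_coeff_zero_if_commutes_with_I[OF finite_supp_oddV[OF y_odd]]) blast
  have "\<sigma> (e (L 0)) = scl (of_int \<epsilon>) (e (L 0))"
    by (simp add: assms(6) addv_def scl_def)
  then have L0: "br lam (scl (of_int \<epsilon>) (e (L 0))) y = scl (- of_rat p) y"
    using is_aut_bb[OF assms(2) _ Hp(1), of "L 0"] is_aut_scl[OF assms(2) Hp(2)]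
    by (simp add: y_def valid_idx_def)
  have "y c = 0" if "c \<noteq> H (of_int \<epsilon> * p)" for c
  proof (cases c)
    case (H q)
    have "of_int \<epsilon> * q \<noteq> p"
      using that H sign_mult_eq_iff[OF \<epsilon>\<epsilon>] by simp
    moreover have "- of_rat p + of_int \<epsilon> * of_rat q = (of_rat (of_int \<epsilon> * q - p) :: complex)"
      by (simp add: of_rat_diff of_rat_mult)
    ultimately have "- of_rat p + of_int \<epsilon> * of_rat q \<noteq> (0::complex)"
      by simp
    with H show ?thesis
      using H_coeff_zero_off_L0_eigenvalue[OF finite_supp_oddV[OF y_odd] G0 L0] by simp
  qed (use G0 oddV_even_coeff[OF y_odd] in \<open>auto simp: is_even_b_def\<close>)
  then show "\<exists>h. \<sigma> (e (H p)) = scl h (e (H (of_int \<epsilon> * p)))"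
    using vec_eq_scl_e y_def by blast
qed

end
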